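(* Let $1\le t\le\min(r,s)$ and $\tau_t=e_{r,r+1}e_{r-1,r+2}\cdots e_{r-t+1,r+t}\in B_{r,s}(\delta)$. Then (1) $(L_{r-a+1}+L_{r+a})\tau_t=0$ for every $1\le a\le t$; (2) $\big(-\sum_{i=r-t+1}^{r}e_{i,j}+\sum_{i=r+1}^{r+t}(i,j)\big)\tau_t=0$ for every $j$ with $r+t+1\le j\le r+s$.
   Context: $B_{r,s}(\delta)$ ($r,s\ge0$, $\delta\in\mathbb C$) is the walled Brauer algebra with basis the $(r,s)$-walled Brauer diagrams (two rows of $r+s$ vertices numbered $1,\dots,r+s$, wall after the first $r$ in each row, each vertex joined to exactly one other, vertical strands do not cross the wall, horizontal strands within a row cross it), product by stacking $d_1$ under $d_2$ (top of $d_1$ identified with bottom of $d_2$) and multiplying by $\delta^n$ for $n$ removed closed loops. $(a,b)$ ($a<b$ on the same side of the wall) is the transposition diagram; $e_{j,k}$ ($j\le r<k$) has horizontal strands joining $j,k$ in both rows, others straight. $L_k=\sum_{j=1}^{k-1}(j,k)$ for $k\le r$, $L_k=-\sum_{j=1}^r e_{j,k}+\sum_{j=r+1}^{k-1}(j,k)+\delta$ for $r<k\le r+s$. *)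

theory Defs
  imports Complex_Main "HOL-Library.Function_Algebras"
begin

text \<open>Vertices of a diagram: (True, i) is vertex i of the top row,
  (False, i) is vertex i of the bottom row, i in {1..n}.
  A diagram is a symmetric edge relation (perfect matching) on these vertices.\<close>

type_synonym vtx = "bool \<times> nat"
type_synonym diagram = "(vtx \<times> vtx) set"

definition verts :: "nat \<Rightarrow> vtx set" where
  "verts n = UNIV \<times> {1..n}"

definition walled_diagram :: "nat \<Rightarrow> nat \<Rightarrow> diagram \<Rightarrow> bool" where
  "walled_diagram r s E \<longleftrightarrow>
     E \<subseteq> verts (r+s) \<times> verts (r+s) \<and> sym E \<and> (\<forall>v. (v,v) \<notin> E) \<and>
     (\<forall>v\<in>verts (r+s). \<exists>!w. (v,w) \<in> E) \<and>
     (\<forall>u w. (u,w) \<in> E \<longrightarrow>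
        (fst u \<noteq> fst w \<longrightarrow> (snd u \<le> r \<longleftrightarrow> snd w \<le> r)) \<and>
        (fst u = fst w \<longrightarrow> (snd u \<le> r \<longleftrightarrow> r < snd w)))"

definition WB :: "nat \<Rightarrow> nat \<Rightarrow> diagram set" where
  "WB r s = {E. walled_diagram r s E}"

text \<open>Stacking: d1 below d2. Layer 0 = bottom row of d1, layer 1 = top row of d1
  identified with bottom row of d2, layer 2 = top row of d2.\<close>

definition stack_graph :: "diagram \<Rightarrow> diagram \<Rightarrow> ((nat \<times> nat) \<times> (nat \<times> nat)) set" where
  "stack_graph d1 d2 =
     (\<lambda>(u,w). ((if fst u then 1 else 0, snd u), (if fst w then 1 else 0, snd w))) ` d1 \<union>
     (\<lambda>(u,w). ((if fst u then 2 else 1, snd u), (if fst w then 2 else 1, snd w))) ` d2"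

definition lift_outer :: "vtx \<Rightarrow> nat \<times> nat" where
  "lift_outer v = (if fst v then 2 else 0, snd v)"

definition comp_diag :: "diagram \<Rightarrow> diagram \<Rightarrow> diagram" where
  "comp_diag d1 d2 = {(u,w). u \<noteq> w \<and> (lift_outer u, lift_outer w) \<in> (stack_graph d1 d2)\<^sup>+}"

definition loops :: "nat \<Rightarrow> diagram \<Rightarrow> diagram \<Rightarrow> nat" where
  "loops n d1 d2 =
     card ((\<lambda>m. (stack_graph d1 d2)\<^sup>* `` {m}) `
       {m. \<exists>i\<in>{1..n}. m = (1,i) \<and>
            (\<forall>v\<in>verts n. (m, lift_outer v) \<notin> (stack_graph d1 d2)\<^sup>*)})"

text \<open>Elements of B_{r,s}(delta): coefficient functions on diagrams.\<close>

type_synonym elt = "diagram \<Rightarrow> complex"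

definition wb_mult :: "nat \<Rightarrow> nat \<Rightarrow> complex \<Rightarrow> elt \<Rightarrow> elt \<Rightarrow> elt" where
  "wb_mult r s \<delta> x y = (\<lambda>d. \<Sum>d1\<in>WB r s. \<Sum>d2\<in>WB r s.
      if comp_diag d1 d2 = d then x d1 * y d2 * \<delta> ^ loops (r+s) d1 d2 else 0)"

definition basis :: "diagram \<Rightarrow> elt" where
  "basis E = (\<lambda>d. if d = E then 1 else 0)"

definition symc :: "diagram \<Rightarrow> diagram" where
  "symc R = R \<union> R\<inverse>"

definition straight_except :: "nat \<Rightarrow> nat set \<Rightarrow> diagram" where
  "straight_except n S = {((True,i),(False,i)) | i. i \<in> {1..n} - S}"

definition id_diag :: "nat \<Rightarrow> diagram" where
  "id_diag n = symc (straight_except n {})"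

definition transp_diag :: "nat \<Rightarrow> nat \<Rightarrow> nat \<Rightarrow> diagram" where
  "transp_diag n a b = symc (straight_except n {a,b} \<union>
      {((True,a),(False,b)), ((True,b),(False,a))})"

definition e_diag :: "nat \<Rightarrow> nat \<Rightarrow> nat \<Rightarrow> diagram" where
  "e_diag n j k = symc (straight_except n {j,k} \<union>
      {((True,j),(True,k)), ((False,j),(False,k))})"

definition wb_one :: "nat \<Rightarrow> nat \<Rightarrow> elt" where
  "wb_one r s = basis (id_diag (r+s))"

definition tr :: "nat \<Rightarrow> nat \<Rightarrow> nat \<Rightarrow> nat \<Rightarrow> elt" where
  "tr r s a b = basis (transp_diag (r+s) a b)"

definition ee :: "nat \<Rightarrow> nat \<Rightarrow> nat \<Rightarrow> nat \<Rightarrow> elt" where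
  "ee r s j k = basis (e_diag (r+s) j k)"

text \<open>Jucys--Murphy elements L_k (addition, negation, sums are pointwise on coefficients)\<close>
definition JM :: "nat \<Rightarrow> nat \<Rightarrow> complex \<Rightarrow> nat \<Rightarrow> elt" where
  "JM r s \<delta> k =
     (if k \<le> r then (\<Sum>j\<in>{1..<k}. tr r s j k)
      else - (\<Sum>j\<in>{1..r}. ee r s j k) + (\<Sum>j\<in>{r+1..<k}. tr r s j k)
           + (\<lambda>d. \<delta> * wb_one r s d))"

fun tau :: "nat \<Rightarrow> nat \<Rightarrow> complex \<Rightarrow> nat \<Rightarrow> elt" where
  "tau r s \<delta> 0 = wb_one r s"
| "tau r s \<delta> (Suc k) = wb_mult r s \<delta> (tau r s \<delta> k) (ee r s (r - k) (r + k + 1))"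

end

theory Submission
  imports Defs "HOL-Combinatorics.Transposition"
begin

text \<open>Every diagram involved is the graph of a fixed-point-free involution of the vertex
  set, and a product of two such diagrams is computed by following strands through the
  stacked picture. The element \<open>\<tau>\<^sub>t\<close> is the diagram joining \<open>m\<close> and \<open>2r + 1 - m\<close> in both
  rows for \<open>r - t < m \<le> r + t\<close> and straight elsewhere. If \<open>\<tau>\<^sub>t\<close> joins the bottom vertices
  \<open>k\<close> and \<open>k'\<close>, then \<open>e\<^sub>j\<^sub>,\<^sub>k \<tau>\<^sub>t\<close> and \<open>(j, k') \<tau>\<^sub>t\<close> are the same diagram for \<open>j \<noteq> k'\<close>,
  while \<open>e\<^sub>k\<^sub>',\<^sub>k \<tau>\<^sub>t = \<delta> \<tau>\<^sub>t\<close>. Hence in (1) the terms of \<open>-\<Sum>\<^sub>j e\<^sub>j\<^sub>,\<^sub>r\<^sub>+\<^sub>a \<tau>\<^sub>t\<close> cancel, one by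
  one, the transpositions in \<open>L\<^sub>r\<^sub>-\<^sub>a\<^sub>+\<^sub>1 \<tau>\<^sub>t\<close> and \<open>L\<^sub>r\<^sub>+\<^sub>a \<tau>\<^sub>t\<close> and the term \<open>\<delta> \<tau>\<^sub>t\<close>; in (2),
  \<open>e\<^sub>i\<^sub>,\<^sub>j \<tau>\<^sub>t = (2r + 1 - i, j) \<tau>\<^sub>t\<close> for every \<open>i\<close>.\<close>

section \<open>Diagrams as fixed-point-free involutions\<close>

definition graph_diag :: "nat \<Rightarrow> (vtx \<Rightarrow> vtx) \<Rightarrow> diagram" where
  "graph_diag n f = {(v, f v) | v. v \<in> verts n}"

definition matching :: "nat \<Rightarrow> (vtx \<Rightarrow> vtx) \<Rightarrow> bool" where
  "matching n f \<longleftrightarrow> (\<forall>v\<in>verts n. f v \<in> verts n \<and> f (f v) = v \<and> f v \<noteq> v)"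

definition walled :: "nat \<Rightarrow> nat \<Rightarrow> (vtx \<Rightarrow> vtx) \<Rightarrow> bool" where
  "walled r n f \<longleftrightarrow> (\<forall>v\<in>verts n.
     (fst v \<noteq> fst (f v) \<longrightarrow> (snd v \<le> r \<longleftrightarrow> snd (f v) \<le> r)) \<and>
     (fst v = fst (f v) \<longrightarrow> (snd v \<le> r \<longleftrightarrow> r < snd (f v))))"

definition index_involution :: "nat \<Rightarrow> (nat \<Rightarrow> nat) \<Rightarrow> bool" where
  "index_involution n \<sigma> \<longleftrightarrow> (\<forall>k\<in>{1..n}. \<sigma> k \<in> {1..n} \<and> \<sigma> (\<sigma> k) = k)"

definition perm_map :: "(nat \<Rightarrow> nat) \<Rightarrow> vtx \<Rightarrow> vtx" where
  "perm_map \<sigma> v = (\<not> fst v, \<sigma> (snd v))"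

definition relabel_bottom :: "(nat \<Rightarrow> nat) \<Rightarrow> vtx \<Rightarrow> vtx" where
  "relabel_bottom \<sigma> v = (if fst v then v else (False, \<sigma> (snd v)))"

definition cup_map :: "nat \<Rightarrow> nat \<Rightarrow> vtx \<Rightarrow> vtx" where
  "cup_map i j v = (if snd v = i then (fst v, j) else if snd v = j then (fst v, i) else (\<not> fst v, snd v))"

lemma verts_iff [simp]: "(b, m) \<in> verts n \<longleftrightarrow> m \<in> {1..n}"
  by (auto simp: verts_def)

lemma mem_graph_diag [simp]: "(u, w) \<in> graph_diag n f \<longleftrightarrow> u \<in> verts n \<and> w = f u"
  unfolding graph_diag_def by blast

lemma graph_diag_cong: "(\<And>v. v \<in> verts n \<Longrightarrow> f v = g v) \<Longrightarrow> graph_diag n f = graph_diag n g"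
  unfolding graph_diag_def by auto

lemma matchingD:
  "matching n f \<Longrightarrow> v \<in> verts n \<Longrightarrow> f v \<in> verts n \<and> f (f v) = v \<and> f v \<noteq> v"
  unfolding matching_def by blast

lemma perm_map_simps [simp]: "perm_map \<sigma> (b, m) = (\<not> b, \<sigma> m)"
  by (simp add: perm_map_def)

lemma relabel_bottom_simps [simp]:
  "relabel_bottom \<sigma> (True, m) = (True, m)" "relabel_bottom \<sigma> (False, m) = (False, \<sigma> m)"
  by (auto simp: relabel_bottom_def)

lemma relabel_bottom_id [simp]: "relabel_bottom id = id"
  by (auto simp: relabel_bottom_def fun_eq_iff)

lemma cup_map_simps [simp]:
  "cup_map i j (b, i) = (b, j)" "i \<noteq> j \<Longrightarrow> cup_map i j (b, j) = (b, i)"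
  "m \<noteq> i \<Longrightarrow> m \<noteq> j \<Longrightarrow> cup_map i j (b, m) = (\<not> b, m)"
  by (auto simp: cup_map_def)

lemma index_involution_id: "index_involution n id"
  by (simp add: index_involution_def)

lemma index_involution_transpose:
  "a \<in> {1..n} \<Longrightarrow> b \<in> {1..n} \<Longrightarrow> index_involution n (transpose a b)"
  by (auto simp: index_involution_def transpose_def)

lemma matching_perm_map: "index_involution n \<sigma> \<Longrightarrow> matching n (perm_map \<sigma>)"
  unfolding matching_def index_involution_def by (auto simp: perm_map_def verts_def)

lemma relabel_bottom_involution:
  assumes "index_involution n \<sigma>" "v \<in> verts n"
  shows "relabel_bottom \<sigma> v \<in> verts n" "relabel_bottom \<sigma> (relabel_bottom \<sigma> v) = v"
  using assms unfolding index_involution_def by (cases v; cases "fst v"; auto)+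

lemma matching_cup_map: "i \<noteq> j \<Longrightarrow> i \<in> {1..n} \<Longrightarrow> j \<in> {1..n} \<Longrightarrow> matching n (cup_map i j)"
  unfolding matching_def by (auto simp: cup_map_def verts_def)

lemma graph_diag_in_WB:
  assumes f: "matching (r+s) f" and w: "walled r (r+s) f"
  shows "graph_diag (r+s) f \<in> WB r s"
  unfolding WB_def walled_diagram_def mem_Collect_eq
proof (intro conjI)
  show "graph_diag (r+s) f \<subseteq> verts (r+s) \<times> verts (r+s)"
    using matchingD[OF f] by auto
  show "sym (graph_diag (r+s) f)"
    using matchingD[OF f] by (auto intro!: symI)
  show "\<forall>v. (v, v) \<notin> graph_diag (r+s) f"
    using matchingD[OF f] by (metis mem_graph_diag)
  show "\<forall>v\<in>verts (r+s). \<exists>!w. (v, w) \<in> graph_diag (r+s) f"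
    by auto
  show "\<forall>u v. (u, v) \<in> graph_diag (r+s) f \<longrightarrow>
      (fst u \<noteq> fst v \<longrightarrow> (snd u \<le> r \<longleftrightarrow> snd v \<le> r)) \<and> (fst u = fst v \<longrightarrow> (snd u \<le> r \<longleftrightarrow> r < snd v))"
    using w unfolding walled_def by auto
qed

lemma id_diag_eq: "id_diag n = graph_diag n (perm_map id)"
proof (rule set_eqI)
  fix x :: "vtx \<times> vtx"
  obtain b1 m1 b2 m2 where x: "x = ((b1, m1), (b2, m2))" by (metis prod.collapse)
  show "x \<in> id_diag n \<longleftrightarrow> x \<in> graph_diag n (perm_map id)"
    unfolding x id_diag_def symc_def straight_except_def by (cases b1; cases b2) auto
qed

lemma transp_diag_eq:
  assumes "a \<in> {1..n}" "b \<in> {1..n}"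
  shows "transp_diag n a b = graph_diag n (perm_map (transpose a b))"
proof (rule set_eqI)
  fix x :: "vtx \<times> vtx"
  obtain b1 m1 b2 m2 where x: "x = ((b1, m1), (b2, m2))" by (metis prod.collapse)
  show "x \<in> transp_diag n a b \<longleftrightarrow> x \<in> graph_diag n (perm_map (transpose a b))"
    unfolding x transp_diag_def symc_def straight_except_def using assms
    by (cases b1; cases b2) (auto simp: transpose_def)
qed

lemma e_diag_eq:
  assumes "a \<noteq> b" "a \<in> {1..n}" "b \<in> {1..n}"
  shows "e_diag n a b = graph_diag n (cup_map a b)"
proof (rule set_eqI)
  fix x :: "vtx \<times> vtx"
  obtain b1 m1 b2 m2 where x: "x = ((b1, m1), (b2, m2))" by (metis prod.collapse)
  show "x \<in> e_diag n a b \<longleftrightarrow> x \<in> graph_diag n (cup_map a b)"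
    unfolding x e_diag_def symc_def straight_except_def using assms
    by (cases b1; cases b2) (auto simp: cup_map_def)
qed

lemma e_diag_commute: "e_diag n a b = e_diag n b a"
  unfolding e_diag_def by (auto simp: symc_def insert_commute)

lemma transp_diag_commute: "transp_diag n a b = transp_diag n b a"
  unfolding transp_diag_def by (auto simp: symc_def insert_commute)

lemma ee_commute: "ee r s a b = ee r s b a"
  by (simp add: ee_def e_diag_commute)

lemma tr_commute: "tr r s a b = tr r s b a"
  by (simp add: tr_def transp_diag_commute)

lemma id_diag_in_WB: "id_diag (r+s) \<in> WB r s"
  unfolding id_diag_eq
  by (rule graph_diag_in_WB) (auto simp: walled_def intro: matching_perm_map index_involution_id)

lemma transp_diag_in_WB:
  assumes "a \<in> {1..r+s}" "b \<in> {1..r+s}" "a \<le> r \<longleftrightarrow> b \<le> r"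
  shows "transp_diag (r+s) a b \<in> WB r s"
  unfolding transp_diag_eq[OF assms(1,2)]
proof (rule graph_diag_in_WB)
  show "matching (r+s) (perm_map (transpose a b))"
    by (rule matching_perm_map index_involution_transpose assms)+
  show "walled r (r+s) (perm_map (transpose a b))"
    using assms unfolding walled_def by (auto simp: transpose_def split: if_splits)
qed

lemma e_diag_in_WB:
  assumes "a \<in> {1..r+s}" "b \<in> {1..r+s}" "a \<le> r \<longleftrightarrow> r < b"
  shows "e_diag (r+s) a b \<in> WB r s"
proof -
  have "a \<noteq> b" using assms(3) by auto
  show ?thesis unfolding e_diag_eq[OF \<open>a \<noteq> b\<close> assms(1,2)]
  proof (rule graph_diag_in_WB)
    show "matching (r+s) (cup_map a b)" by (rule matching_cup_map) (use \<open>a \<noteq> b\<close> assms in auto)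
    show "walled r (r+s) (cup_map a b)" using assms unfolding walled_def cup_map_def by auto
  qed
qed

section \<open>The product on basis diagrams\<close>

lemma finite_WB: "finite (WB r s)"
proof (rule finite_subset)
  show "WB r s \<subseteq> Pow (verts (r+s) \<times> verts (r+s))"
    unfolding WB_def walled_diagram_def by auto
  show "finite (Pow (verts (r+s) \<times> verts (r+s)))"
    by (simp add: verts_def)
qed

lemma wb_mult_basis:
  assumes "x \<in> WB r s" "y \<in> WB r s"
  shows "wb_mult r s \<delta> (basis x) (basis y) = (\<lambda>d. \<delta> ^ loops (r+s) x y * basis (comp_diag x y) d)"
proof
  fix d
  let ?c = "\<delta> ^ loops (r+s) x y * basis (comp_diag x y) d"
  have "wb_mult r s \<delta> (basis x) (basis y) d
      = (\<Sum>d1\<in>WB r s. if d1 = x then (\<Sum>d2\<in>WB r s. if d2 = y then ?c else 0) else 0)"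
    unfolding wb_mult_def
  proof (rule sum.cong[OF refl])
    fix d1
    show "(\<Sum>d2\<in>WB r s. if comp_diag d1 d2 = d then basis x d1 * basis y d2 * \<delta> ^ loops (r+s) d1 d2 else 0)
        = (if d1 = x then \<Sum>d2\<in>WB r s. if d2 = y then ?c else 0 else 0)"
    proof (cases "d1 = x")
      case True
      then show ?thesis by (auto simp: basis_def intro!: sum.cong)
    qed (simp add: basis_def cong: if_cong)
  qed
  also have "\<dots> = ?c"
    using assms by (simp add: finite_WB)
  finally show "wb_mult r s \<delta> (basis x) (basis y) d = \<delta> ^ loops (r+s) x y * basis (comp_diag x y) d" .
qed

lemma wb_mult_add_left: "wb_mult r s \<delta> (x + y) z = wb_mult r s \<delta> x z + wb_mult r s \<delta> y z"
  unfolding wb_mult_def by (auto simp: fun_eq_iff sum.distrib[symmetric] distrib_right intro!: sum.cong)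

lemma wb_mult_uminus_left: "wb_mult r s \<delta> (- x) z = - wb_mult r s \<delta> x z"
  unfolding wb_mult_def by (auto simp: fun_eq_iff sum_negf[symmetric] intro!: sum.cong)

lemma wb_mult_zero_left: "wb_mult r s \<delta> 0 z = 0"
  unfolding wb_mult_def by (simp add: fun_eq_iff cong: if_cong)

lemma wb_mult_scale_left: "wb_mult r s \<delta> (\<lambda>d. c * x d) z = (\<lambda>d. c * wb_mult r s \<delta> x z d)"
  unfolding wb_mult_def by (auto simp: fun_eq_iff sum_distrib_left intro!: sum.cong)

lemma wb_mult_sum_left: "wb_mult r s \<delta> (\<Sum>i\<in>I. F i) z = (\<Sum>i\<in>I. wb_mult r s \<delta> (F i) z)"
proof (induction I rule: infinite_finite_induct)
  case (insert i I)
  then show ?case by (simp only: sum.insert[OF insert.hyps] wb_mult_add_left insert.IH)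
qed (metis sum.infinite sum.empty wb_mult_zero_left)+

section \<open>Following strands through the stacked picture\<close>

definition stack_lower :: "vtx \<Rightarrow> nat \<times> nat" where
  "stack_lower v = (if fst v then 1 else 0, snd v)"

definition stack_upper :: "vtx \<Rightarrow> nat \<times> nat" where
  "stack_upper v = (if fst v then 2 else 1, snd v)"

lemma stack_lower_simps [simp]: "stack_lower (True, m) = (1, m)" "stack_lower (False, m) = (0, m)"
  by (auto simp: stack_lower_def)

lemma stack_upper_simps [simp]: "stack_upper (True, m) = (2, m)" "stack_upper (False, m) = (1, m)"
  by (auto simp: stack_upper_def)

lemma lift_outer_simps [simp]: "lift_outer (True, m) = (2, m)" "lift_outer (False, m) = (0, m)"
  by (auto simp: lift_outer_def)

lemma stack_lower_eq_iff [simp]: "stack_lower v = stack_lower w \<longleftrightarrow> v = w"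
  unfolding stack_lower_def by (auto simp: prod_eq_iff split: if_splits)

lemma stack_upper_eq_iff [simp]: "stack_upper v = stack_upper w \<longleftrightarrow> v = w"
  unfolding stack_upper_def by (auto simp: prod_eq_iff split: if_splits)

lemma stack_lower_eq_stack_upper_iff:
  "stack_lower v = stack_upper w \<longleftrightarrow> (\<exists>m. v = (True, m) \<and> w = (False, m))"
  by (cases v; cases w) (auto simp: stack_lower_def stack_upper_def)

lemma lift_outer_eq_stack_lower_iff: "lift_outer v = stack_lower w \<longleftrightarrow> \<not> fst v \<and> v = w"
  unfolding lift_outer_def stack_lower_def by (auto simp: prod_eq_iff)

lemma lift_outer_eq_stack_upper_iff: "lift_outer v = stack_upper w \<longleftrightarrow> fst v \<and> v = w"
  unfolding lift_outer_def stack_upper_def by (auto simp: prod_eq_iff)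

lemma lift_outer_eq_iff [simp]: "lift_outer v = lift_outer w \<longleftrightarrow> v = w"
  unfolding lift_outer_def by (auto simp: prod_eq_iff split: if_splits)

lemma stack_lower_eq_lift_outer_iff: "stack_lower w = lift_outer v \<longleftrightarrow> \<not> fst v \<and> v = w"
  using lift_outer_eq_stack_lower_iff by metis

lemma stack_upper_eq_lift_outer_iff: "stack_upper w = lift_outer v \<longleftrightarrow> fst v \<and> v = w"
  using lift_outer_eq_stack_upper_iff by metis

lemma stack_upper_eq_stack_lower_iff:
  "stack_upper w = stack_lower v \<longleftrightarrow> (\<exists>m. v = (True, m) \<and> w = (False, m))"
  using stack_lower_eq_stack_upper_iff by metis

lemma stack_graph_graph_diag:
  "stack_graph (graph_diag n g) (graph_diag n f) =
     {(stack_lower v, stack_lower (g v)) | v. v \<in> verts n} \<union>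
     {(stack_upper v, stack_upper (f v)) | v. v \<in> verts n}"
proof -
  have "(\<lambda>(u, w). ((if fst u then 1 else 0, snd u), (if fst w then 1 else 0, snd w)))
      = (\<lambda>(u, w). (stack_lower u, stack_lower w))"
       "(\<lambda>(u, w). ((if fst u then 2 else 1, snd u), (if fst w then 2 else 1, snd w)))
      = (\<lambda>(u, w). (stack_upper u, stack_upper w))"
    by (auto simp: stack_lower_def stack_upper_def)
  moreover have "(\<lambda>(u, w). (F u, F w)) ` graph_diag n h = {(F v, F (h v)) | v. v \<in> verts n}"
    for F :: "vtx \<Rightarrow> nat \<times> nat" and h
    unfolding graph_diag_def Setcompr_eq_image image_image by simp
  ultimately show ?thesis unfolding stack_graph_def by simp
qed

lemma stack_edge_lower:
  "v \<in> verts n \<Longrightarrow> (stack_lower v, stack_lower (g v)) \<in> stack_graph (graph_diag n g) (graph_diag n f)"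
  unfolding stack_graph_graph_diag by blast

lemma stack_edge_upper:
  "v \<in> verts n \<Longrightarrow> (stack_upper v, stack_upper (f v)) \<in> stack_graph (graph_diag n g) (graph_diag n f)"
  unfolding stack_graph_graph_diag by blast

lemma sym_stack_graph:
  assumes g: "matching n g" and f: "matching n f"
  shows "sym (stack_graph (graph_diag n g) (graph_diag n f))"
proof (rule symI)
  fix x y assume "(x, y) \<in> stack_graph (graph_diag n g) (graph_diag n f)"
  then obtain v where v: "v \<in> verts n"
    and "(x = stack_lower v \<and> y = stack_lower (g v)) \<or> (x = stack_upper v \<and> y = stack_upper (f v))"
    unfolding stack_graph_graph_diag by blast
  then show "(y, x) \<in> stack_graph (graph_diag n g) (graph_diag n f)"
    using stack_edge_lower[where v = "g v" and n = n and g = g and f = f]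
      stack_edge_upper[where v = "f v" and n = n and g = g and f = f]
      matchingD[OF g v] matchingD[OF f v] by auto
qed

lemma stack_graph_Image_subsetI:
  assumes "\<And>v. v \<in> verts n \<Longrightarrow> stack_lower v \<in> S \<Longrightarrow> stack_lower (g v) \<in> S"
    and "\<And>v. v \<in> verts n \<Longrightarrow> stack_upper v \<in> S \<Longrightarrow> stack_upper (f v) \<in> S"
  shows "stack_graph (graph_diag n g) (graph_diag n f) `` S \<subseteq> S"
  using assms unfolding stack_graph_graph_diag by blast

lemma lift_outer_edge_verts:
  assumes "(lift_outer u, y) \<in> stack_graph (graph_diag n g) (graph_diag n f)"
  shows "u \<in> verts n"
proof -
  obtain v where "v \<in> verts n" and "lift_outer u = stack_lower v \<or> lift_outer u = stack_upper v"
    using assms unfolding stack_graph_graph_diag by blast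
  then show ?thesis
    by (cases u; cases v; cases "fst u"; cases "fst v") auto
qed

text \<open>The closed set \<open>S\<close> certifies that the connected component of the outer vertex \<open>u\<close> in the
  stacked picture contains no outer vertex other than \<open>u\<close> and \<open>w\<close>.\<close>

definition stack_joined :: "diagram \<Rightarrow> diagram \<Rightarrow> vtx \<Rightarrow> vtx \<Rightarrow> bool" where
  "stack_joined d1 d2 u w \<longleftrightarrow> (lift_outer u, lift_outer w) \<in> (stack_graph d1 d2)\<^sup>+ \<and>
     (\<exists>S. stack_graph d1 d2 `` S \<subseteq> S \<and> lift_outer u \<in> S \<and> (\<forall>v. lift_outer v \<in> S \<longrightarrow> v = u \<or> v = w))"

lemma stack_joined_sym:
  assumes "sym (stack_graph d1 d2)" "stack_joined d1 d2 u w"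
  shows "stack_joined d1 d2 w u"
proof -
  let ?G = "stack_graph d1 d2"
  obtain S where path: "(lift_outer u, lift_outer w) \<in> ?G\<^sup>+" and S: "?G `` S \<subseteq> S"
    "lift_outer u \<in> S" "\<forall>v. lift_outer v \<in> S \<longrightarrow> v = u \<or> v = w"
    using assms(2) unfolding stack_joined_def by blast
  have "(lift_outer w, lift_outer u) \<in> ?G\<^sup>+"
    using path sym_trancl[OF assms(1)] by (auto dest: symD)
  moreover have "lift_outer w \<in> S"
    using Image_closed_trancl[OF S(1)] S(2) trancl_into_rtrancl[OF path] by blast
  ultimately show ?thesis using S unfolding stack_joined_def by blast
qed

lemma mem_comp_diag:
  "(u, w) \<in> comp_diag d1 d2 \<longleftrightarrow> u \<noteq> w \<and> (lift_outer u, lift_outer w) \<in> (stack_graph d1 d2)\<^sup>+"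
  by (simp add: comp_diag_def)

lemma comp_diag_graph_diag:
  assumes "\<And>u. u \<in> verts n \<Longrightarrow> h u \<noteq> u \<and> stack_joined (graph_diag n g) (graph_diag n f) u (h u)"
  shows "comp_diag (graph_diag n g) (graph_diag n f) = graph_diag n h"
proof (rule set_eqI)
  let ?G = "stack_graph (graph_diag n g) (graph_diag n f)"
  fix x :: "vtx \<times> vtx"
  obtain u w where x: "x = (u, w)" by (cases x)
  show "x \<in> comp_diag (graph_diag n g) (graph_diag n f) \<longleftrightarrow> x \<in> graph_diag n h"
  proof
    assume "x \<in> comp_diag (graph_diag n g) (graph_diag n f)"
    then have "u \<noteq> w" and path: "(lift_outer u, lift_outer w) \<in> ?G\<^sup>+"
      unfolding x mem_comp_diag by simp_all
    obtain y where "(lift_outer u, y) \<in> ?G" using tranclD[OF path] by blast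
    then have u: "u \<in> verts n" by (rule lift_outer_edge_verts)
    obtain S where "?G `` S \<subseteq> S" "lift_outer u \<in> S"
      and S: "\<forall>v. lift_outer v \<in> S \<longrightarrow> v = u \<or> v = h u"
      using conjunct2[OF assms[OF u]] unfolding stack_joined_def by blast
    then have "lift_outer w \<in> ?G\<^sup>* `` S"
      using trancl_into_rtrancl[OF path] by blast
    then have "lift_outer w \<in> S" using Image_closed_trancl[OF \<open>?G `` S \<subseteq> S\<close>] by simp
    then have "w = h u" using S \<open>u \<noteq> w\<close> by blast
    then show "x \<in> graph_diag n h" using u unfolding x by simp
  next
    assume "x \<in> graph_diag n h"
    then have "u \<in> verts n" "w = h u" unfolding x by simp_all
    then show "x \<in> comp_diag (graph_diag n g) (graph_diag n f)"
      using assms[OF \<open>u \<in> verts n\<close>] unfolding x mem_comp_diag stack_joined_def by metis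
  qed
qed

lemma loops_eq_0I:
  assumes "\<And>m. m \<in> {1..n} \<Longrightarrow> \<exists>v\<in>verts n. ((1, m), lift_outer v) \<in> (stack_graph d1 d2)\<^sup>*"
  shows "loops n d1 d2 = 0"
proof -
  have "{m. \<exists>i\<in>{1..n}. m = (1, i) \<and> (\<forall>v\<in>verts n. (m, lift_outer v) \<notin> (stack_graph d1 d2)\<^sup>*)} = {}"
    using assms by fastforce
  then show ?thesis unfolding loops_def by simp
qed

lemma stack_closed_set_lower:
  assumes g: "matching n g" and W: "W \<subseteq> verts n" "f ` W \<subseteq> W"
    and stay: "\<And>m. (False, m) \<in> W \<Longrightarrow> fst (g (True, m)) \<Longrightarrow> (False, snd (g (True, m))) \<in> W"
  obtains S where "stack_graph (graph_diag n g) (graph_diag n f) `` S \<subseteq> S" "stack_upper ` W \<subseteq> S"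
    and "\<And>v. lift_outer v \<in> S \<Longrightarrow>
      (fst v \<and> v \<in> W) \<or> (\<not> fst v \<and> (\<exists>m. (False, m) \<in> W \<and> v = g (True, m)))"
proof
  define S where "S = stack_upper ` W \<union> stack_lower ` g ` {(True, m) | m. (False, m) \<in> W}"
  show "stack_upper ` W \<subseteq> S" unfolding S_def by blast
  show "stack_graph (graph_diag n g) (graph_diag n f) `` S \<subseteq> S"
  proof (rule stack_graph_Image_subsetI)
    fix v assume v: "v \<in> verts n" and "stack_lower v \<in> S"
    then consider w where "w \<in> W" "stack_lower v = stack_upper w"
      | m where "(False, m) \<in> W" "v = g (True, m)"
      unfolding S_def by auto
    then show "stack_lower (g v) \<in> S"
    proof cases
      case 1
      then obtain m where "v = (True, m)" "w = (False, m)"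
        by (auto simp: stack_lower_eq_stack_upper_iff)
      with 1 show ?thesis unfolding S_def by blast
    next
      case 2
      then have "(True, m) \<in> verts n" using W(1) by auto
      then have "g v = (True, m)" using matchingD[OF g] 2(2) by blast
      then show ?thesis using 2(1) unfolding S_def
        by (auto intro!: image_eqI[of _ stack_upper "(False, m)"])
    qed
  next
    fix v assume v: "v \<in> verts n" and "stack_upper v \<in> S"
    then consider "v \<in> W" | m where "(False, m) \<in> W" "stack_upper v = stack_lower (g (True, m))"
      unfolding S_def by auto
    then have "v \<in> W"
    proof cases
      case 2
      then obtain k where "g (True, m) = (True, k)" "v = (False, k)"
        by (metis stack_lower_eq_stack_upper_iff)
      then show ?thesis using stay[OF 2(1)] by simp
    qed
    then show "stack_upper (f v) \<in> S" using W(2) unfolding S_def by blast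
  qed
  fix v assume "lift_outer v \<in> S"
  then show "(fst v \<and> v \<in> W) \<or> (\<not> fst v \<and> (\<exists>m. (False, m) \<in> W \<and> v = g (True, m)))"
    unfolding S_def by (auto simp: lift_outer_eq_stack_lower_iff lift_outer_eq_stack_upper_iff)
qed

lemma stack_upper_rtrancl_lift_outer:
  assumes "z \<in> verts n" and exit: "\<And>m. z = (False, m) \<Longrightarrow> g (True, m) = (False, \<sigma> m)"
  shows "(stack_upper z, lift_outer (relabel_bottom \<sigma> z)) \<in> (stack_graph (graph_diag n g) (graph_diag n f))\<^sup>*"
proof (cases z)
  case (Pair b m)
  show ?thesis
  proof (cases b)
    case False
    have "(stack_lower (True, m), stack_lower (g (True, m))) \<in> stack_graph (graph_diag n g) (graph_diag n f)"
      by (rule stack_edge_lower) (use assms(1) Pair in simp)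
    moreover have "g (True, m) = (False, \<sigma> m)" using exit Pair False by simp
    ultimately show ?thesis using Pair False by (simp add: r_into_rtrancl)
  qed (use Pair in simp)
qed

lemma stack_joined_exit_lower:
  assumes g: "matching n g" and f: "matching n f" and w: "w \<in> verts n"
    and exit: "\<And>m. (False, m) \<in> {w, f w} \<Longrightarrow> g (True, m) = (False, \<sigma> m)"
  shows "stack_joined (graph_diag n g) (graph_diag n f) (relabel_bottom \<sigma> w) (relabel_bottom \<sigma> (f w))"
proof -
  let ?G = "stack_graph (graph_diag n g) (graph_diag n f)"
  let ?R = "relabel_bottom \<sigma>"
  have fw: "f w \<in> verts n" "f (f w) = w" using matchingD[OF f w] by auto
  have sym: "sym (?G\<^sup>*)" by (rule sym_rtrancl[OF sym_stack_graph[OF g f]])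
  have out_w: "(stack_upper w, lift_outer (?R w)) \<in> ?G\<^sup>*"
    by (rule stack_upper_rtrancl_lift_outer) (use w exit in auto)
  have out_fw: "(stack_upper (f w), lift_outer (?R (f w))) \<in> ?G\<^sup>*"
    by (rule stack_upper_rtrancl_lift_outer) (use fw exit in auto)
  have "(lift_outer (?R w), lift_outer (?R (f w))) \<in> ?G\<^sup>+"
    using trancl_rtrancl_trancl[OF rtrancl_into_trancl1[OF symD[OF sym out_w]
        stack_edge_upper[OF w, where g = g and f = f]] out_fw] .
  moreover
  obtain S where closed: "?G `` S \<subseteq> S" and "stack_upper ` {w, f w} \<subseteq> S"
    and outer: "\<And>v. lift_outer v \<in> S \<Longrightarrow>
      (fst v \<and> v \<in> {w, f w}) \<or> (\<not> fst v \<and> (\<exists>m. (False, m) \<in> {w, f w} \<and> v = g (True, m)))"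
    by (rule stack_closed_set_lower[OF g, of "{w, f w}" f]) (use w fw exit in auto)
  have "lift_outer (?R w) \<in> ?G\<^sup>* `` S"
    using out_w \<open>stack_upper ` {w, f w} \<subseteq> S\<close> by blast
  then have "lift_outer (?R w) \<in> S" unfolding Image_closed_trancl[OF closed] .
  moreover have "v = ?R w \<or> v = ?R (f w)" if v: "lift_outer v \<in> S" for v
  proof -
    consider "fst v" "v \<in> {w, f w}" | m where "(False, m) \<in> {w, f w}" "v = g (True, m)"
      using outer[OF v] by blast
    then show ?thesis
    proof cases
      case 1
      then show ?thesis by (auto simp: relabel_bottom_def)
    next
      case 2
      then have "v = ?R (False, m)" using exit by simp
      with 2(1) show ?thesis by (metis empty_iff insert_iff)
    qed
  qed
  ultimately show ?thesis unfolding stack_joined_def using closed by blast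
qed

section \<open>Products with the generators\<close>

lemma comp_perm_map_left:
  assumes f: "matching n f" and \<sigma>: "index_involution n \<sigma>"
  shows "comp_diag (graph_diag n (perm_map \<sigma>)) (graph_diag n f)
      = graph_diag n (relabel_bottom \<sigma> \<circ> f \<circ> relabel_bottom \<sigma>)"
    and "loops n (graph_diag n (perm_map \<sigma>)) (graph_diag n f) = 0"
proof -
  let ?R = "relabel_bottom \<sigma>"
  have g: "matching n (perm_map \<sigma>)" by (rule matching_perm_map[OF \<sigma>])
  note R = relabel_bottom_involution[OF \<sigma>]
  show "comp_diag (graph_diag n (perm_map \<sigma>)) (graph_diag n f) = graph_diag n (?R \<circ> f \<circ> ?R)"
  proof (rule comp_diag_graph_diag)
    fix u assume u: "u \<in> verts n"
    have Ru: "?R u \<in> verts n" by (rule R(1)[OF u])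
    have "stack_joined (graph_diag n (perm_map \<sigma>)) (graph_diag n f) (?R (?R u)) (?R (f (?R u)))"
      by (rule stack_joined_exit_lower[OF g f Ru]) auto
    moreover have "?R (f (?R u)) \<noteq> u"
      using R[OF Ru] R[of "f (?R u)"] matchingD[OF f Ru] by metis
    ultimately show "(?R \<circ> f \<circ> ?R) u \<noteq> u \<and>
        stack_joined (graph_diag n (perm_map \<sigma>)) (graph_diag n f) u ((?R \<circ> f \<circ> ?R) u)"
      using R(2)[OF u] by simp
  qed
  show "loops n (graph_diag n (perm_map \<sigma>)) (graph_diag n f) = 0"
  proof (rule loops_eq_0I)
    fix m assume m: "m \<in> {1..n}"
    have "(stack_upper (False, m), lift_outer (?R (False, m)))
        \<in> (stack_graph (graph_diag n (perm_map \<sigma>)) (graph_diag n f))\<^sup>*"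
      by (rule stack_upper_rtrancl_lift_outer) (use m in auto)
    then show "\<exists>v\<in>verts n. ((1, m), lift_outer v)
        \<in> (stack_graph (graph_diag n (perm_map \<sigma>)) (graph_diag n f))\<^sup>*"
      using \<sigma> m unfolding index_involution_def by (intro bexI[of _ "(False, \<sigma> m)"]) simp_all
  qed
qed

lemma stack_joined_cup_bottom:
  assumes "j \<noteq> k" "j \<in> {1..n}" "k \<in> {1..n}"
  shows "stack_joined (graph_diag n (cup_map j k)) (graph_diag n f) (False, j) (False, k)"
  unfolding stack_joined_def
proof
  let ?G = "stack_graph (graph_diag n (cup_map j k)) (graph_diag n f)"
  show "(lift_outer (False, j), lift_outer (False, k)) \<in> ?G\<^sup>+"
    using stack_edge_lower[where v = "(False, j)" and n = n and g = "cup_map j k" and f = f] assms by auto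
  have "?G `` {(0, j), (0, k)} \<subseteq> {(0, j), (0, k)}"
    by (rule stack_graph_Image_subsetI)
      (use assms in \<open>auto simp: stack_lower_def stack_upper_def split: if_splits\<close>)
  then show "\<exists>S. ?G `` S \<subseteq> S \<and> lift_outer (False, j) \<in> S \<and>
      (\<forall>v. lift_outer v \<in> S \<longrightarrow> v = (False, j) \<or> v = (False, k))"
    by (intro exI[of _ "{(0, j), (0, k)}"]) (auto simp: lift_outer_def prod_eq_iff)
qed

lemma stack_joined_cup_top:
  assumes "j \<noteq> k" "j \<in> {1..n}" "k \<in> {1..n}"
  shows "stack_joined (graph_diag n f) (graph_diag n (cup_map j k)) (True, j) (True, k)"
  unfolding stack_joined_def
proof
  let ?G = "stack_graph (graph_diag n f) (graph_diag n (cup_map j k))"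
  show "(lift_outer (True, j), lift_outer (True, k)) \<in> ?G\<^sup>+"
    using stack_edge_upper[where v = "(True, j)" and n = n and g = f and f = "cup_map j k"] assms by auto
  have "?G `` {(2, j), (2, k)} \<subseteq> {(2, j), (2, k)}"
    by (rule stack_graph_Image_subsetI)
      (use assms in \<open>auto simp: stack_lower_def stack_upper_def split: if_splits\<close>)
  then show "\<exists>S. ?G `` S \<subseteq> S \<and> lift_outer (True, j) \<in> S \<and>
      (\<forall>v. lift_outer v \<in> S \<longrightarrow> v = (True, j) \<or> v = (True, k))"
    by (intro exI[of _ "{(2, j), (2, k)}"]) (auto simp: lift_outer_def prod_eq_iff)
qed

lemma relabel_bottom_transpose_other:
  "v \<noteq> (False, a) \<Longrightarrow> v \<noteq> (False, b) \<Longrightarrow> relabel_bottom (transpose a b) v = v"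
  by (cases v; cases "fst v") auto

lemma stack_joined_cup_through:
  assumes f: "matching n f" and jk: "j \<noteq> k" "j \<in> {1..n}" "k \<in> {1..n}"
    and fk: "f (False, k) = (False, k')" and "j \<noteq> k'"
  shows "stack_joined (graph_diag n (cup_map j k)) (graph_diag n f) (f (False, j)) (False, k')"
proof -
  let ?g = "cup_map j k"
  let ?G = "stack_graph (graph_diag n ?g) (graph_diag n f)"
  define x where "x = f (False, j)"
  have g: "matching n ?g" by (rule matching_cup_map[OF jk])
  have k': "k' \<in> {1..n}" "k' \<noteq> k" "f (False, k') = (False, k)"
    using matchingD[OF f, of "(False, k)"] jk fk by auto
  have x: "x \<in> verts n" "f x = (False, j)" "x \<noteq> (False, j)"
    using matchingD[OF f, of "(False, j)"] jk unfolding x_def by auto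
  have x_ne: "x \<noteq> (False, k)" "x \<noteq> (False, k')"
    using x(2) fk k'(3) \<open>j \<noteq> k'\<close> jk(1) by auto
  have exit_x: "?g (True, m) = (False, id m)" if "x = (False, m)" for m
    using that x(3) x_ne by auto
  have "(stack_upper x, lift_outer (relabel_bottom id x)) \<in> ?G\<^sup>*"
    by (rule stack_upper_rtrancl_lift_outer[OF x(1)]) (rule exit_x)
  then have x_out: "(stack_upper x, lift_outer x) \<in> ?G\<^sup>*" by simp
  have "(lift_outer x, stack_upper x) \<in> ?G\<^sup>*"
    using symD[OF sym_rtrancl[OF sym_stack_graph[OF g f]] x_out] .
  moreover have "(stack_upper x, (1, j)) \<in> ?G"
    using stack_edge_upper[OF x(1), where g = ?g and f = f] x(2) by simp
  moreover have "((1, j), (1, k)) \<in> ?G"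
    using stack_edge_lower[where v = "(True, j)" and n = n and g = ?g and f = f] jk by simp
  moreover have "((1, k), (1, k')) \<in> ?G"
    using stack_edge_upper[where v = "(False, k)" and n = n and g = ?g and f = f] jk fk by simp
  moreover have "((1, k'), lift_outer (False, k')) \<in> ?G"
    using stack_edge_lower[where v = "(True, k')" and n = n and g = ?g and f = f] k' \<open>j \<noteq> k'\<close>
    by simp
  ultimately have path: "(lift_outer x, lift_outer (False, k')) \<in> ?G\<^sup>+"
    by (meson rtrancl_into_trancl1 trancl_into_trancl)
  define W where "W = {x, (False, j), (False, k), (False, k')}"
  have W: "W \<subseteq> verts n" "f ` W \<subseteq> W"
    unfolding W_def using x jk k' fk x_def by auto
  have stay: "(False, snd (?g (True, m))) \<in> W" if "(False, m) \<in> W" "fst (?g (True, m))" for m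
    using that jk(1) unfolding W_def by (auto simp: cup_map_def split: if_splits)
  obtain S where closed: "?G `` S \<subseteq> S" and "stack_upper ` W \<subseteq> S"
    and outer: "\<And>v. lift_outer v \<in> S \<Longrightarrow>
      (fst v \<and> v \<in> W) \<or> (\<not> fst v \<and> (\<exists>m. (False, m) \<in> W \<and> v = ?g (True, m)))"
    using stack_closed_set_lower[OF g W stay] by blast
  have "lift_outer x \<in> ?G\<^sup>* `` S"
    using x_out \<open>stack_upper ` W \<subseteq> S\<close> unfolding W_def by blast
  then have "lift_outer x \<in> S" unfolding Image_closed_trancl[OF closed] .
  moreover have "v = x \<or> v = (False, k')" if "lift_outer v \<in> S" for v
    using outer[OF that] x(3) x_ne jk(1) unfolding W_def by (auto simp: cup_map_def split: if_splits)
  ultimately show ?thesis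
    unfolding stack_joined_def x_def[symmetric] using path closed by blast
qed

lemma stack_joined_cup_left_straight:
  assumes f: "matching n f" and jk: "j \<noteq> k" "j \<in> {1..n}" "k \<in> {1..n}" and u: "u \<in> verts n"
    and "u \<notin> {(False, j), (False, k)}" "f u \<notin> {(False, j), (False, k)}"
  shows "stack_joined (graph_diag n (cup_map j k)) (graph_diag n f) u (f u)"
proof -
  have "stack_joined (graph_diag n (cup_map j k)) (graph_diag n f) (relabel_bottom id u) (relabel_bottom id (f u))"
  proof (rule stack_joined_exit_lower[OF matching_cup_map[OF jk] f u])
    fix m assume "(False, m) \<in> {u, f u}"
    then have "m \<noteq> j" "m \<noteq> k" using assms(6,7) by auto
    then show "cup_map j k (True, m) = (False, id m)" by simp
  qed
  then show ?thesis by simp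
qed

lemma comp_cup_map_left:
  assumes f: "matching n f" and jk: "j \<noteq> k" "j \<in> {1..n}" "k \<in> {1..n}"
    and fk: "f (False, k) = (False, k')" and "j \<noteq> k'"
  defines "R \<equiv> relabel_bottom (transpose j k')"
  shows "comp_diag (graph_diag n (cup_map j k)) (graph_diag n f) = graph_diag n (R \<circ> f \<circ> R)"
proof -
  let ?g = "cup_map j k"
  let ?G = "stack_graph (graph_diag n ?g) (graph_diag n f)"
  define x where "x = f (False, j)"
  have g: "matching n ?g" by (rule matching_cup_map[OF jk])
  have sym: "sym ?G" by (rule sym_stack_graph[OF g f])
  have k': "k' \<in> {1..n}" "k' \<noteq> k" "f (False, k') = (False, k)"
    using matchingD[OF f, of "(False, k)"] jk fk by auto
  have x: "x \<in> verts n" "f x = (False, j)" "x \<noteq> (False, j)" "x \<noteq> (False, k)" "x \<noteq> (False, k')"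
    using matchingD[OF f, of "(False, j)"] jk fk k'(3) \<open>j \<noteq> k'\<close> unfolding x_def by auto
  have R_other: "R v = v" if "v \<noteq> (False, j)" "v \<noteq> (False, k')" for v
    unfolding R_def by (rule relabel_bottom_transpose_other[OF that])
  show ?thesis
  proof (rule comp_diag_graph_diag)
    fix u assume u: "u \<in> verts n"
    consider "u = (False, j)" | "u = (False, k)" | "u = x" | "u = (False, k')"
      | "u \<notin> {(False, j), (False, k), x, (False, k')}" by blast
    then show "(R \<circ> f \<circ> R) u \<noteq> u \<and> stack_joined (graph_diag n ?g) (graph_diag n f) u ((R \<circ> f \<circ> R) u)"
    proof cases
      case 1
      then show ?thesis using stack_joined_cup_bottom[OF jk, of f] k' jk(1) fk
        by (simp add: R_def)
    next
      case 2
      then show ?thesis using stack_joined_sym[OF sym stack_joined_cup_bottom[OF jk, of f]] k' jk(1) fk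
        by (simp add: R_def)
    next
      case 3
      then show ?thesis using stack_joined_cup_through[OF f jk fk \<open>j \<noteq> k'\<close>] x R_other
        by (simp add: x_def R_def)
    next
      case 4
      then show ?thesis using stack_joined_sym[OF sym stack_joined_cup_through[OF f jk fk \<open>j \<noteq> k'\<close>]] x R_other
        by (simp add: x_def R_def)
    next
      case 5
      have "f u \<noteq> (False, j)" "f u \<noteq> (False, k')"
        using 5 matchingD[OF f u] x(2) k'(3) unfolding x_def by auto
      then have "(R \<circ> f \<circ> R) u = f u" using 5 R_other by simp
      moreover have "f u \<noteq> (False, k)" using 5 matchingD[OF f u] fk by auto
      ultimately show ?thesis
        using 5 stack_joined_cup_left_straight[OF f jk u] matchingD[OF f u] \<open>f u \<noteq> (False, j)\<close> by auto
    qed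
  qed
qed

lemma loops_cup_map_left:
  assumes f: "matching n f" and jk: "j \<noteq> k" "j \<in> {1..n}" "k \<in> {1..n}"
    and fk: "f (False, k) = (False, k')" and "j \<noteq> k'"
  shows "loops n (graph_diag n (cup_map j k)) (graph_diag n f) = 0"
proof (rule loops_eq_0I)
  let ?g = "cup_map j k"
  let ?G = "stack_graph (graph_diag n ?g) (graph_diag n f)"
  fix m assume m: "m \<in> {1..n}"
  have exit: "(stack_upper z, lift_outer z) \<in> ?G\<^sup>*"
    if "z \<in> verts n" "z \<notin> {(False, j), (False, k)}" for z
    using stack_upper_rtrancl_lift_outer[OF that(1), of ?g id f] that(2) by force
  show "\<exists>v\<in>verts n. ((1, m), lift_outer v) \<in> ?G\<^sup>*"
  proof (cases "m \<in> {j, k}")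
    case True
    then have "f (False, m) \<in> verts n" "f (False, m) \<notin> {(False, j), (False, k)}"
      using matchingD[OF f, of "(False, j)"] matchingD[OF f, of "(False, k)"] jk fk \<open>j \<noteq> k'\<close> by auto
    moreover have "((1, m), stack_upper (f (False, m))) \<in> ?G"
      using stack_edge_upper[where v = "(False, m)" and n = n and g = ?g and f = f] m by simp
    ultimately show ?thesis using exit by (meson converse_rtrancl_into_rtrancl)
  next
    case False
    then show ?thesis using exit[of "(False, m)"] m by (intro bexI[of _ "(False, m)"]) auto
  qed
qed

lemma comp_cup_map_left_loop:
  assumes f: "matching n f" and jk: "j \<noteq> k" "j \<in> {1..n}" "k \<in> {1..n}"
    and fj: "f (False, j) = (False, k)"
  shows "comp_diag (graph_diag n (cup_map j k)) (graph_diag n f) = graph_diag n f"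
proof -
  let ?g = "cup_map j k"
  let ?G = "stack_graph (graph_diag n ?g) (graph_diag n f)"
  have g: "matching n ?g" by (rule matching_cup_map[OF jk])
  have sym: "sym ?G" by (rule sym_stack_graph[OF g f])
  have fk: "f (False, k) = (False, j)" using matchingD[OF f, of "(False, j)"] jk fj by auto
  show ?thesis
  proof (rule comp_diag_graph_diag)
    fix u assume u: "u \<in> verts n"
    consider "u = (False, j)" | "u = (False, k)" | "u \<notin> {(False, j), (False, k)}" by blast
    then show "f u \<noteq> u \<and> stack_joined (graph_diag n ?g) (graph_diag n f) u (f u)"
    proof cases
      case 1
      then show ?thesis using stack_joined_cup_bottom[OF jk, of f] fj jk(1) by simp
    next
      case 2
      then show ?thesis using stack_joined_sym[OF sym stack_joined_cup_bottom[OF jk, of f]] fk jk(1) by simp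
    next
      case 3
      then have "f u \<notin> {(False, j), (False, k)}" using matchingD[OF f u] fj fk by auto
      then show ?thesis using stack_joined_cup_left_straight[OF f jk u] 3 matchingD[OF f u] by auto
    qed
  qed
qed

lemma stack_cup_loop_trapped:
  assumes f: "matching n f" and jk: "j \<noteq> k" "j \<in> {1..n}" "k \<in> {1..n}"
    and fj: "f (False, j) = (False, k)" and m: "m \<in> {j, k}"
  shows "((1, m), lift_outer v) \<notin> (stack_graph (graph_diag n (cup_map j k)) (graph_diag n f))\<^sup>*"
proof
  let ?g = "cup_map j k"
  let ?G = "stack_graph (graph_diag n ?g) (graph_diag n f)"
  have g: "matching n ?g" by (rule matching_cup_map[OF jk])
  have fk: "f (False, k) = (False, j)" using matchingD[OF f, of "(False, j)"] jk fj by auto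
  define W where "W = {(False, j), (False, k)}"
  have W: "W \<subseteq> verts n" "f ` W \<subseteq> W" unfolding W_def using jk fj fk by auto
  have stay: "(False, snd (?g (True, i))) \<in> W" if "(False, i) \<in> W" for i
    using that jk(1) unfolding W_def by auto
  obtain S where closed: "?G `` S \<subseteq> S" and "stack_upper ` W \<subseteq> S"
    and outer: "\<And>v. lift_outer v \<in> S \<Longrightarrow>
      (fst v \<and> v \<in> W) \<or> (\<not> fst v \<and> (\<exists>i. (False, i) \<in> W \<and> v = ?g (True, i)))"
    using stack_closed_set_lower[OF g W stay] by blast
  assume "((1, m), lift_outer v) \<in> ?G\<^sup>*"
  moreover have "(1, m) \<in> S" using \<open>stack_upper ` W \<subseteq> S\<close> m unfolding W_def by force
  ultimately have "lift_outer v \<in> S" using Image_closed_trancl[OF closed] by blast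
  then have "(fst v \<and> v \<in> W) \<or> (\<not> fst v \<and> (\<exists>i. (False, i) \<in> W \<and> v = ?g (True, i)))"
    by (rule outer)
  then show False using jk(1) unfolding W_def by auto
qed

lemma loops_cup_map_left_loop:
  assumes f: "matching n f" and jk: "j \<noteq> k" "j \<in> {1..n}" "k \<in> {1..n}"
    and fj: "f (False, j) = (False, k)"
  shows "loops n (graph_diag n (cup_map j k)) (graph_diag n f) = 1"
proof -
  let ?g = "cup_map j k"
  let ?G = "stack_graph (graph_diag n ?g) (graph_diag n f)"
  have sym: "sym ?G" by (rule sym_stack_graph[OF matching_cup_map[OF jk] f])
  note trapped = stack_cup_loop_trapped[OF f jk fj]
  have "{m. \<exists>i\<in>{1..n}. m = (1, i) \<and> (\<forall>v\<in>verts n. (m, lift_outer v) \<notin> ?G\<^sup>*)} = {(1, j), (1, k)}"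
  proof (intro equalityI subsetI)
    fix p assume "p \<in> {m. \<exists>i\<in>{1..n}. m = (1, i) \<and> (\<forall>v\<in>verts n. (m, lift_outer v) \<notin> ?G\<^sup>*)}"
    then obtain i where i: "i \<in> {1..n}" "p = (1, i)" "\<forall>v\<in>verts n. (p, lift_outer v) \<notin> ?G\<^sup>*"
      by (auto simp del: lift_outer_simps)
    have "i \<in> {j, k}"
    proof (rule ccontr)
      assume "i \<notin> {j, k}"
      then have "((1, i), lift_outer (False, i)) \<in> ?G"
        using stack_edge_lower[where v = "(True, i)" and n = n and g = ?g and f = f] i(1) by simp
      then have "(p, lift_outer (False, i)) \<in> ?G\<^sup>*" using i(2) by (simp add: r_into_rtrancl)
      moreover have "(False, i) \<in> verts n" using i(1) by simp
      ultimately show False using i(3) by blast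
    qed
    then show "p \<in> {(1, j), (1, k)}" using i(2) by blast
  qed (use jk trapped in auto)
  moreover have "?G\<^sup>* `` {(1, j)} = ?G\<^sup>* `` {(1, k)}"
  proof -
    have "((1, j), (1, k)) \<in> ?G"
      using stack_edge_lower[where v = "(True, j)" and n = n and g = ?g and f = f] jk by simp
    then have "((1, j), (1, k)) \<in> ?G\<^sup>*" "((1, k), (1, j)) \<in> ?G\<^sup>*" using sym by (auto dest: symD)
    then show ?thesis by (blast intro: rtrancl_trans)
  qed
  ultimately show "loops n (graph_diag n ?g) (graph_diag n f) = 1"
    unfolding loops_def by simp
qed

lemma stack_joined_cup_right_bottom:
  assumes f: "matching n f" and pq: "p \<noteq> q" "p \<in> {1..n}" "q \<in> {1..n}"
    and fp: "f (True, p) = (False, p)" and fq: "f (True, q) = (False, q)"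
  shows "stack_joined (graph_diag n f) (graph_diag n (cup_map p q)) (False, p) (False, q)"
  unfolding stack_joined_def
proof
  let ?G = "stack_graph (graph_diag n f) (graph_diag n (cup_map p q))"
  have fp': "f (False, p) = (True, p)" and fq': "f (False, q) = (True, q)"
    using matchingD[OF f, of "(True, p)"] matchingD[OF f, of "(True, q)"] pq fp fq by auto
  have "((0, p), (1, p)) \<in> ?G"
    using stack_edge_lower[where v = "(False, p)" and n = n and g = f and f = "cup_map p q"] pq fp' by simp
  moreover have "((1, p), (1, q)) \<in> ?G"
    using stack_edge_upper[where v = "(False, p)" and n = n and g = f and f = "cup_map p q"] pq by simp
  moreover have "((1, q), (0, q)) \<in> ?G"
    using stack_edge_lower[where v = "(True, q)" and n = n and g = f and f = "cup_map p q"] pq fq by simp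
  ultimately show "(lift_outer (False, p), lift_outer (False, q)) \<in> ?G\<^sup>+"
    by (simp add: trancl_into_trancl)
  let ?S = "{(0, p), (1, p), (1, q), (0, q)}"
  have "?G `` ?S \<subseteq> ?S"
    by (rule stack_graph_Image_subsetI) (use pq fp fq fp' fq' in \<open>auto simp: stack_lower_def stack_upper_def prod_eq_iff split: if_splits\<close>)
  then show "\<exists>S. ?G `` S \<subseteq> S \<and> lift_outer (False, p) \<in> S \<and>
      (\<forall>v. lift_outer v \<in> S \<longrightarrow> v = (False, p) \<or> v = (False, q))"
    by (intro exI[of _ ?S]) (auto simp: lift_outer_def prod_eq_iff)
qed

lemma stack_joined_cup_right_straight:
  assumes f: "matching n f" and pq: "p \<noteq> q" "p \<in> {1..n}" "q \<in> {1..n}" and u: "u \<in> verts n"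
    and "snd u \<notin> {p, q}" "snd (f u) \<notin> {p, q}"
  shows "stack_joined (graph_diag n f) (graph_diag n (cup_map p q)) u (f u)"
  unfolding stack_joined_def
proof
  let ?e = "cup_map p q"
  let ?G = "stack_graph (graph_diag n f) (graph_diag n ?e)"
  have fu: "f u \<in> verts n" "f (f u) = u" using matchingD[OF f u] by auto
  have exit: "(stack_lower z, lift_outer z) \<in> ?G\<^sup>*" if "z \<in> verts n" "snd z \<notin> {p, q}" for z
  proof (cases z)
    case (Pair b m)
    show ?thesis
    proof (cases b)
      case True
      have "(stack_upper (False, m), stack_upper (?e (False, m))) \<in> ?G"
        by (rule stack_edge_upper) (use that Pair in simp)
      then show ?thesis using that Pair True by (simp add: r_into_rtrancl)
    qed (use Pair in simp)
  qed
  have sym: "sym (?G\<^sup>*)" by (rule sym_rtrancl[OF sym_stack_graph[OF f matching_cup_map[OF pq]]])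
  show "(lift_outer u, lift_outer (f u)) \<in> ?G\<^sup>+"
    using trancl_rtrancl_trancl[OF rtrancl_into_trancl1[OF symD[OF sym exit[OF u assms(6)]]
        stack_edge_lower[OF u, where g = f and f = ?e]] exit[OF fu(1) assms(7)]] .
  let ?S = "stack_lower ` {u, f u} \<union> lift_outer ` {u, f u}"
  have "?G `` ?S \<subseteq> ?S"
  proof (rule stack_graph_Image_subsetI)
    fix v assume "v \<in> verts n" "stack_lower v \<in> ?S"
    then have "v \<in> {u, f u}" by (auto simp: stack_lower_eq_lift_outer_iff)
    then show "stack_lower (f v) \<in> ?S" using fu by auto
  next
    fix v assume "v \<in> verts n" "stack_upper v \<in> ?S"
    then consider m where "v = (False, m)" "(True, m) \<in> {u, f u}" | m where "v = (True, m)" "(True, m) \<in> {u, f u}"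
      by (cases v) (auto simp: stack_upper_eq_stack_lower_iff stack_upper_eq_lift_outer_iff)
    then show "stack_upper (?e v) \<in> ?S"
    proof cases
      case 1
      then have "m \<notin> {p, q}" using assms(6,7) by (metis empty_iff insert_iff snd_conv)
      then have "stack_upper (?e v) = lift_outer (True, m)" using 1(1) by simp
      then show ?thesis using 1(2) by (metis UnI2 image_eqI)
    next
      case 2
      then have "m \<notin> {p, q}" using assms(6,7) by (metis empty_iff insert_iff snd_conv)
      then have "stack_upper (?e v) = stack_lower (True, m)" using 2(1) by simp
      then show ?thesis using 2(2) by (metis UnI1 image_eqI)
    qed
  qed
  moreover have "v \<in> {u, f u}" if "lift_outer v \<in> ?S" for v
    using that by (auto simp: lift_outer_eq_stack_lower_iff)
  moreover have "lift_outer u \<in> ?S" by blast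
  ultimately show "\<exists>S. ?G `` S \<subseteq> S \<and> lift_outer u \<in> S \<and> (\<forall>v. lift_outer v \<in> S \<longrightarrow> v = u \<or> v = f u)"
    by (intro exI[of _ ?S]) simp
qed

lemma comp_cup_map_right:
  assumes f: "matching n f" and pq: "p \<noteq> q" "p \<in> {1..n}" "q \<in> {1..n}"
    and fp: "f (True, p) = (False, p)" and fq: "f (True, q) = (False, q)"
  shows "comp_diag (graph_diag n f) (graph_diag n (cup_map p q))
      = graph_diag n (\<lambda>v. if snd v \<in> {p, q} then cup_map p q v else f v)"
proof -
  let ?e = "cup_map p q"
  let ?G = "stack_graph (graph_diag n f) (graph_diag n ?e)"
  let ?h = "\<lambda>v. if snd v \<in> {p, q} then ?e v else f v"
  have sym: "sym ?G" by (rule sym_stack_graph[OF f matching_cup_map[OF pq]])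
  have fp': "f (False, p) = (True, p)" and fq': "f (False, q) = (True, q)"
    using matchingD[OF f, of "(True, p)"] matchingD[OF f, of "(True, q)"] pq fp fq by auto
  show ?thesis
  proof (rule comp_diag_graph_diag)
    fix u assume u: "u \<in> verts n"
    consider "u = (True, p)" | "u = (True, q)" | "u = (False, p)" | "u = (False, q)" | "snd u \<notin> {p, q}"
      by (cases u) auto
    then show "?h u \<noteq> u \<and> stack_joined (graph_diag n f) (graph_diag n ?e) u (?h u)"
    proof cases
      case 1
      then show ?thesis using stack_joined_cup_top[OF pq, of f] pq(1) by simp
    next
      case 2
      then show ?thesis using stack_joined_sym[OF sym stack_joined_cup_top[OF pq, of f]] pq(1) by simp
    next
      case 3
      then show ?thesis using stack_joined_cup_right_bottom[OF f pq fp fq] pq(1) by simp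
    next
      case 4
      then show ?thesis
        using stack_joined_sym[OF sym stack_joined_cup_right_bottom[OF f pq fp fq]] pq(1) by simp
    next
      case 5
      have "snd (f u) \<notin> {p, q}"
      proof
        assume "snd (f u) \<in> {p, q}"
        then have "f u \<in> {(True, p), (False, p), (True, q), (False, q)}" by (cases "f u") auto
        then have "u \<in> {(False, p), (True, p), (False, q), (True, q)}"
          using matchingD[OF f u] fp fq fp' fq' by auto
        then show False using 5 by auto
      qed
      then show ?thesis using 5 stack_joined_cup_right_straight[OF f pq u] matchingD[OF f u] by auto
    qed
  qed
qed

lemma loops_cup_map_right:
  assumes f: "matching n f" and pq: "p \<noteq> q" "p \<in> {1..n}" "q \<in> {1..n}"
    and fp: "f (True, p) = (False, p)" and fq: "f (True, q) = (False, q)"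
  shows "loops n (graph_diag n f) (graph_diag n (cup_map p q)) = 0"
proof (rule loops_eq_0I)
  let ?e = "cup_map p q"
  let ?G = "stack_graph (graph_diag n f) (graph_diag n ?e)"
  fix m assume m: "m \<in> {1..n}"
  show "\<exists>v\<in>verts n. ((1, m), lift_outer v) \<in> ?G\<^sup>*"
  proof (cases "m \<in> {p, q}")
    case True
    then have "((1, m), lift_outer (False, m)) \<in> ?G"
      using stack_edge_lower[where v = "(True, m)" and n = n and g = f and f = ?e] m fp fq by auto
    then show ?thesis using m by (intro bexI[of _ "(False, m)"]) auto
  next
    case False
    then have "((1, m), lift_outer (True, m)) \<in> ?G"
      using stack_edge_upper[where v = "(False, m)" and n = n and g = f and f = ?e] m by auto
    then show ?thesis using m by (intro bexI[of _ "(True, m)"]) auto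
  qed
qed

lemma wb_mult_one_left:
  assumes f: "matching (r+s) f" "walled r (r+s) f"
  shows "wb_mult r s \<delta> (wb_one r s) (basis (graph_diag (r+s) f)) = basis (graph_diag (r+s) f)"
  using wb_mult_basis[OF id_diag_in_WB graph_diag_in_WB[OF f]] comp_perm_map_left[OF f(1) index_involution_id]
  by (simp add: wb_one_def id_diag_eq)

lemma wb_mult_ee_eq_tr:
  assumes f: "matching (r+s) f" "walled r (r+s) f"
    and jk: "j \<in> {1..r+s}" "k \<in> {1..r+s}" "j \<le> r \<longleftrightarrow> r < k"
    and fk: "f (False, k) = (False, k')" and "j \<noteq> k'"
  shows "wb_mult r s \<delta> (ee r s j k) (basis (graph_diag (r+s) f))
       = wb_mult r s \<delta> (tr r s j k') (basis (graph_diag (r+s) f))"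
proof -
  have "j \<noteq> k" using jk(3) by auto
  have k': "k' \<in> {1..r+s}" using matchingD[OF f(1), of "(False, k)"] jk(2) fk by auto
  have "(False, k) \<in> verts (r+s)" using jk(2) by simp
  then have "k \<le> r \<longleftrightarrow> r < k'" using f(2) fk unfolding walled_def by fastforce
  then have side: "j \<le> r \<longleftrightarrow> k' \<le> r" using jk(3) by auto
  note fWB = graph_diag_in_WB[OF f]
  show ?thesis
    using wb_mult_basis[OF e_diag_in_WB[OF jk] fWB, of \<delta>]
      wb_mult_basis[OF transp_diag_in_WB[OF jk(1) k' side] fWB, of \<delta>]
      comp_cup_map_left[OF f(1) \<open>j \<noteq> k\<close> jk(1,2) fk \<open>j \<noteq> k'\<close>]
      loops_cup_map_left[OF f(1) \<open>j \<noteq> k\<close> jk(1,2) fk \<open>j \<noteq> k'\<close>]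
      comp_perm_map_left[OF f(1) index_involution_transpose[OF jk(1) k']]
    by (simp add: ee_def tr_def e_diag_eq[OF \<open>j \<noteq> k\<close> jk(1,2)] transp_diag_eq[OF jk(1) k'])
qed

lemma wb_mult_ee_loop:
  assumes f: "matching (r+s) f" "walled r (r+s) f"
    and jk: "j \<in> {1..r+s}" "k \<in> {1..r+s}" "j \<le> r \<longleftrightarrow> r < k"
    and fj: "f (False, j) = (False, k)"
  shows "wb_mult r s \<delta> (ee r s j k) (basis (graph_diag (r+s) f)) = (\<lambda>d. \<delta> * basis (graph_diag (r+s) f) d)"
proof -
  have "j \<noteq> k" using jk(3) by auto
  show ?thesis
    using wb_mult_basis[OF e_diag_in_WB[OF jk] graph_diag_in_WB[OF f], of \<delta>]
      comp_cup_map_left_loop[OF f(1) \<open>j \<noteq> k\<close> jk(1,2) fj]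
      loops_cup_map_left_loop[OF f(1) \<open>j \<noteq> k\<close> jk(1,2) fj]
    by (simp add: ee_def e_diag_eq[OF \<open>j \<noteq> k\<close> jk(1,2)])
qed

section \<open>The element \<open>\<tau>\<^sub>t\<close>\<close>

definition tau_map :: "nat \<Rightarrow> nat \<Rightarrow> vtx \<Rightarrow> vtx" where
  "tau_map r t v =
     (if r < snd v + t \<and> snd v \<le> r + t then (fst v, 2*r + 1 - snd v) else (\<not> fst v, snd v))"

lemma matching_tau_map: "t \<le> r \<Longrightarrow> t \<le> s \<Longrightarrow> matching (r+s) (tau_map r t)"
proof -
  have "2*r + 1 - m \<noteq> m" for m :: nat by presburger
  then show "t \<le> r \<Longrightarrow> t \<le> s \<Longrightarrow> matching (r+s) (tau_map r t)"
    unfolding matching_def by (auto simp: tau_map_def verts_def)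
qed

lemma walled_tau_map: "t \<le> r \<Longrightarrow> walled r (r+s) (tau_map r t)"
  unfolding walled_def by (auto simp: tau_map_def)

lemma tau_eq_basis: "t \<le> r \<Longrightarrow> t \<le> s \<Longrightarrow> tau r s \<delta> t = basis (graph_diag (r+s) (tau_map r t))"
proof (induction t)
  case 0
  have "graph_diag (r+s) (perm_map id) = graph_diag (r+s) (tau_map r 0)"
    by (rule graph_diag_cong) (auto simp: tau_map_def perm_map_def)
  then show ?case by (simp add: wb_one_def id_diag_eq)
next
  case (Suc t)
  define p where "p = r - t"
  define q where "q = r + t + 1"
  have pq: "p \<noteq> q" "p \<in> {1..r+s}" "q \<in> {1..r+s}" "p \<le> r \<longleftrightarrow> r < q"
    using Suc.prems unfolding p_def q_def by auto
  have f: "matching (r+s) (tau_map r t)" "walled r (r+s) (tau_map r t)"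
    using matching_tau_map walled_tau_map Suc.prems by auto
  have straight: "tau_map r t (True, p) = (False, p)" "tau_map r t (True, q) = (False, q)"
    using Suc.prems unfolding p_def q_def by (auto simp: tau_map_def)
  have "graph_diag (r+s) (\<lambda>v. if snd v \<in> {p, q} then cup_map p q v else tau_map r t v)
      = graph_diag (r+s) (tau_map r (Suc t))"
    by (rule graph_diag_cong) (use Suc.prems in \<open>auto simp: tau_map_def cup_map_def p_def q_def\<close>)
  moreover have "tau r s \<delta> (Suc t) = wb_mult r s \<delta> (tau r s \<delta> t) (ee r s p q)"
    by (simp add: p_def q_def)
  ultimately show ?case
    using Suc wb_mult_basis[OF graph_diag_in_WB[OF f] e_diag_in_WB[OF pq(2-4)], of \<delta>]
      comp_cup_map_right[OF f(1) pq(1-3) straight] loops_cup_map_right[OF f(1) pq(1-3) straight]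
    by (simp add: ee_def e_diag_eq[OF pq(1-3)])
qed

lemma tau_map_bottom:
  "t \<le> r \<Longrightarrow> r - t < m \<Longrightarrow> m \<le> r + t \<Longrightarrow> tau_map r t (False, m) = (False, 2*r + 1 - m)"
  by (auto simp: tau_map_def)

lemma wb_mult_one_tau: "t \<le> r \<Longrightarrow> t \<le> s \<Longrightarrow> wb_mult r s \<delta> (wb_one r s) (tau r s \<delta> t) = tau r s \<delta> t"
  unfolding tau_eq_basis by (intro wb_mult_one_left matching_tau_map walled_tau_map)

lemma ee_mult_tau_right_partner:
  assumes t: "t \<le> r" "t \<le> s" and j: "j \<in> {1..r}" and k: "k \<in> {r+1..r+t}" and "j \<noteq> 2*r + 1 - k"
  shows "wb_mult r s \<delta> (ee r s j k) (tau r s \<delta> t) = wb_mult r s \<delta> (tr r s j (2*r + 1 - k)) (tau r s \<delta> t)"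
  unfolding tau_eq_basis[OF t]
  by (rule wb_mult_ee_eq_tr[OF matching_tau_map[OF t] walled_tau_map[OF t(1)]])
    (use assms in \<open>auto simp: tau_map_bottom\<close>)

lemma ee_mult_tau_left_partner:
  assumes t: "t \<le> r" "t \<le> s" and i: "i \<in> {r-t+1..r}" and k: "k \<in> {r+1..r+s}" and "k \<noteq> 2*r + 1 - i"
  shows "wb_mult r s \<delta> (ee r s i k) (tau r s \<delta> t) = wb_mult r s \<delta> (tr r s (2*r + 1 - i) k) (tau r s \<delta> t)"
  unfolding ee_commute[of r s i] tr_commute[of r s "2*r + 1 - i"] tau_eq_basis[OF t]
  by (rule wb_mult_ee_eq_tr[OF matching_tau_map[OF t] walled_tau_map[OF t(1)]])
    (use assms in \<open>auto simp: tau_map_bottom\<close>)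

lemma ee_mult_tau_loop:
  assumes t: "t \<le> r" "t \<le> s" and i: "i \<in> {r-t+1..r}"
  shows "wb_mult r s \<delta> (ee r s i (2*r + 1 - i)) (tau r s \<delta> t) = (\<lambda>d. \<delta> * tau r s \<delta> t d)"
  unfolding tau_eq_basis[OF t]
  by (rule wb_mult_ee_loop[OF matching_tau_map[OF t] walled_tau_map[OF t(1)]])
    (use assms in \<open>auto simp: tau_map_bottom\<close>)

lemma JM_pair_mult_tau_eq_0:
  assumes a: "1 \<le> a" "a \<le> t" and t: "t \<le> r" "t \<le> s"
  shows "wb_mult r s \<delta> (JM r s \<delta> (r - a + 1) + JM r s \<delta> (r + a)) (tau r s \<delta> t) = 0"
proof -
  define p where "p = r - a + 1"
  define q where "q = r + a"
  define \<tau> where "\<tau> = tau r s \<delta> t"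
  define E where "E j = wb_mult r s \<delta> (ee r s j q) \<tau>" for j
  define P where "P j = wb_mult r s \<delta> (tr r s j p) \<tau>" for j
  define Q where "Q j = wb_mult r s \<delta> (tr r s j q) \<tau>" for j
  have pq: "1 \<le> p" "p \<le> r" "r < q" "q \<le> r + s" "p + q = 2*r + 1" "r - t < p"
    using a t unfolding p_def q_def by auto
  then have partner: "2*r + 1 - q = p" "2*r + 1 - p = q" by auto
  have JM_p: "JM r s \<delta> p = (\<Sum>j\<in>{1..<p}. tr r s j p)"
    and JM_q: "JM r s \<delta> q = - (\<Sum>j\<in>{1..r}. ee r s j q) + (\<Sum>j\<in>{r+1..<q}. tr r s j q) + (\<lambda>d. \<delta> * wb_one r s d)"
    using pq by (simp_all add: JM_def)
  have lhs: "wb_mult r s \<delta> (JM r s \<delta> p + JM r s \<delta> q) \<tau>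
      = (\<Sum>j\<in>{1..<p}. P j) + (- (\<Sum>j\<in>{1..r}. E j) + (\<Sum>j\<in>{r+1..<q}. Q j) + (\<lambda>d. \<delta> * \<tau> d))"
    unfolding JM_p JM_q wb_mult_add_left wb_mult_uminus_left wb_mult_sum_left wb_mult_scale_left
      E_def P_def Q_def \<tau>_def wb_mult_one_tau[OF t] ..
  have E_below: "E j = P j" if "j \<in> {1..<p}" for j
    using ee_mult_tau_right_partner[OF t, of j q] that pq unfolding E_def P_def \<tau>_def partner by auto
  have E_p: "E p = (\<lambda>d. \<delta> * \<tau> d)"
    using ee_mult_tau_loop[OF t, of p] pq unfolding E_def \<tau>_def partner by auto
  have E_above: "E j = Q (2*r + 1 - j)" if "j \<in> {p<..r}" for j
    using ee_mult_tau_left_partner[OF t, of j q] that pq unfolding E_def Q_def \<tau>_def by auto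
  have split: "{1..r} = {1..<p} \<union> insert p {p<..r}" using pq by auto
  have "(\<Sum>j\<in>{1..r}. E j) = (\<Sum>j\<in>{1..<p}. E j) + (\<Sum>j\<in>insert p {p<..r}. E j)"
    unfolding split by (rule sum.union_disjoint) auto
  also have "(\<Sum>j\<in>insert p {p<..r}. E j) = E p + (\<Sum>j\<in>{p<..r}. E j)"
    by (rule sum.insert) auto
  also have "(\<Sum>j\<in>{1..<p}. E j) = (\<Sum>j\<in>{1..<p}. P j)" by (rule sum.cong[OF refl E_below])
  also have "(\<Sum>j\<in>{p<..r}. E j) = (\<Sum>j\<in>{p<..r}. Q (2*r + 1 - j))" by (rule sum.cong[OF refl E_above])
  also have "\<dots> = (\<Sum>j\<in>{r+1..<q}. Q j)"
    by (rule sum.reindex_bij_witness[of _ "\<lambda>j. 2*r + 1 - j" "\<lambda>j. 2*r + 1 - j"]) (use pq in auto)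
  finally have "wb_mult r s \<delta> (JM r s \<delta> p + JM r s \<delta> q) \<tau> = 0"
    unfolding lhs E_p by (simp only: algebra_simps) simp
  then show ?thesis unfolding p_def q_def \<tau>_def .
qed

lemma ee_tr_sum_mult_tau_eq_0:
  assumes t: "t \<le> r" "t \<le> s" and j: "j \<in> {r+t+1..r+s}"
  shows "wb_mult r s \<delta> (- (\<Sum>i\<in>{r-t+1..r}. ee r s i j) + (\<Sum>i\<in>{r+1..r+t}. tr r s i j)) (tau r s \<delta> t) = 0"
proof -
  define Q where "Q i = wb_mult r s \<delta> (tr r s i j) (tau r s \<delta> t)" for i
  have "(\<Sum>i\<in>{r-t+1..r}. wb_mult r s \<delta> (ee r s i j) (tau r s \<delta> t)) = (\<Sum>i\<in>{r-t+1..r}. Q (2*r + 1 - i))"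
    using ee_mult_tau_left_partner[OF t _ _] j unfolding Q_def by (intro sum.cong) auto
  also have "\<dots> = (\<Sum>i\<in>{r+1..r+t}. Q i)"
    by (rule sum.reindex_bij_witness[of _ "\<lambda>i. 2*r + 1 - i" "\<lambda>i. 2*r + 1 - i"]) (use t in auto)
  finally show ?thesis
    unfolding wb_mult_add_left wb_mult_uminus_left wb_mult_sum_left Q_def by simp
qed

theorem mainTheorem7:
  fixes r s t :: nat and \<delta> :: complex
  assumes "1 \<le> t" and "t \<le> min r s"
  shows "(\<forall>a\<in>{1..t}. wb_mult r s \<delta> (JM r s \<delta> (r - a + 1) + JM r s \<delta> (r + a)) (tau r s \<delta> t) = 0)
       \<and> (\<forall>j\<in>{r+t+1..r+s}.
            wb_mult r s \<delta> (- (\<Sum>i\<in>{r-t+1..r}. ee r s i j) + (\<Sum>i\<in>{r+1..r+t}. tr r s i j))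
              (tau r s \<delta> t) = 0)"
  using JM_pair_mult_tau_eq_0[of _ t r s \<delta>] ee_tr_sum_mult_tau_eq_0[of t r s _ \<delta>] assms(2) by auto

end
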